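(* There exists a uniform mixture of $k$ Gaussian distributions in $\mathbb R^d$ with identity covariance such that any algorithm (not necessarily efficient) that, given samples $y_1,\dots,y_n$ from the mixture, outputs for each sample $r$ a mean estimate $\mu_{k_r}$, incurs expected error $\mathbb E\Big[\frac1n\sum_{r=1}^n\|\mu_{k_r}-\mu^*_{k^*_r}\|_2^2\Big]\geq c\log k$ for some absolute constant $c>0$.
   Context: $\mu^*_{k^*_r}$ denotes the true mean of the component from which sample $y_r$ was generated. *)

theory Defs
  imports "HOL-Probability.Probability"
begin

text \<open>Vectors in R^d are represented as functions nat => real, of which only the
coordinates i < d matter.\<close>

definition gauss :: "nat \<Rightarrow> (nat \<Rightarrow> real) \<Rightarrow> (nat \<Rightarrow> real) measure" where
  "gauss d \<mu> = PiM {..<d} (\<lambda>i. density lborel (normal_density (\<mu> i) 1))"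

definition sqdist :: "nat \<Rightarrow> (nat \<Rightarrow> real) \<Rightarrow> (nat \<Rightarrow> real) \<Rightarrow> real" where
  "sqdist d x y = (\<Sum>i<d. (x i - y i)\<^sup>2)"

definition obs_space :: "nat \<Rightarrow> nat \<Rightarrow> (nat \<Rightarrow> nat \<Rightarrow> real) measure" where
  "obs_space n d = PiM {..<n} (\<lambda>_. PiM {..<d} (\<lambda>_. lborel))"

text \<open>The true labels z_r are
i.i.d. uniform on {..<k} (hence the average over all label vectors), and given z the
samples y_r are independent with y_r ~ N(mus (z r), I_d).  The algorithm sees the
samples ys and outputs k mean estimates  means ys j  and a label  lab ys r  for each
sample r; the error is (1/n) sum_r || means ys (lab ys r) - mus (z r) ||^2.\<close>
definition expected_error ::
  "nat \<Rightarrow> nat \<Rightarrow> nat \<Rightarrow> (nat \<Rightarrow> nat \<Rightarrow> real)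
   \<Rightarrow> ((nat \<Rightarrow> nat \<Rightarrow> real) \<Rightarrow> nat \<Rightarrow> nat \<Rightarrow> real)
   \<Rightarrow> ((nat \<Rightarrow> nat \<Rightarrow> real) \<Rightarrow> nat \<Rightarrow> nat) \<Rightarrow> ennreal" where
  "expected_error k d n mus means lab =
     ennreal (1 / real k ^ n) *
     (\<Sum>z\<in>PiE {..<n} (\<lambda>_. {..<k}).
        \<integral>\<^sup>+ ys. ennreal ((1 / real n) * (\<Sum>r<n. sqdist d (means ys (lab ys r)) (mus (z r))))
          \<partial>(PiM {..<n} (\<lambda>r. gauss d (mus (z r)))))"

end

theory Submission
  imports Defs
begin

text \<open>Put the k centres at s e_1, ..., s e_k with e^(s^2) = 0.81 k; they are pairwise at squared
distance 2 s^2. Fix one sample and the labels of all other samples. Whatever estimate m the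
algorithm outputs, it lies within squared distance s^2/2 of at most one centre, so summing over
the k possible labels of the sample, weighted by the Gaussian densities p_j of the centres, the
error is at least (s^2/2) (sum_j p_j - max_j p_j). Each p_j has mass 1, while the identity
p_j^2 = e^(s^2) p_0 p_(2 s e_j) and AM-GM bound max_j p_j by an envelope of total mass
(lam e^(s^2) k + 1/lam)/2, which is 0.9 k for lam = 10/(9k). Hence the expected error is at
least s^2/20 >= (ln k)/40.\<close>

lemma PiM_density:
  fixes M :: "'i \<Rightarrow> 'a measure"
  assumes I: "finite I"
    and sigma_finite_M: "\<And>i. sigma_finite_measure (M i)"
    and f_measurable[measurable]: "\<And>i. f i \<in> borel_measurable (M i)"
    and sigma_finite_density: "\<And>i. sigma_finite_measure (density (M i) (f i))"
  shows "PiM I (\<lambda>i. density (M i) (f i)) = density (PiM I M) (\<lambda>x. \<Prod>i\<in>I. f i (x i))"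
proof -
  interpret D: product_sigma_finite "\<lambda>i. density (M i) (f i)"
    using sigma_finite_density by (simp add: product_sigma_finite_def)
  interpret P: product_sigma_finite M
    using sigma_finite_M by (simp add: product_sigma_finite_def)
  show ?thesis
  proof (rule D.PiM_eqI[symmetric, OF I])
    show "sets (density (PiM I M) (\<lambda>x. \<Prod>i\<in>I. f i (x i))) = sets (PiM I (\<lambda>i. density (M i) (f i)))"
      unfolding sets_density by (intro sets_PiM_cong) simp_all
  next
    fix A assume "\<And>i. i \<in> I \<Longrightarrow> A i \<in> sets (density (M i) (f i))"
    then have A: "\<And>i. i \<in> I \<Longrightarrow> A i \<in> sets (M i)" by simp
    have "emeasure (density (PiM I M) (\<lambda>x. \<Prod>i\<in>I. f i (x i))) (PiE I A)
        = (\<integral>\<^sup>+ x. (\<Prod>i\<in>I. f i (x i)) * indicator (PiE I A) x \<partial>PiM I M)"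
      using A I by (simp add: emeasure_density sets_PiM_I_finite)
    also have "\<dots> = (\<integral>\<^sup>+ x. (\<Prod>i\<in>I. f i (x i) * indicator (A i) (x i)) \<partial>PiM I M)"
    proof (rule nn_integral_cong)
      fix x assume "x \<in> space (PiM I M)"
      then have "indicator (PiE I A) x = (\<Prod>i\<in>I. indicator (A i) (x i) :: ennreal)"
        by (auto simp: space_PiM indicator_def PiE_def Pi_def extensional_def I)
      then show "(\<Prod>i\<in>I. f i (x i)) * indicator (PiE I A) x = (\<Prod>i\<in>I. f i (x i) * indicator (A i) (x i))"
        by (simp add: prod.distrib)
    qed
    also have "\<dots> = (\<Prod>i\<in>I. \<integral>\<^sup>+ y. f i y * indicator (A i) y \<partial>M i)"
      using A by (intro P.product_nn_integral_prod I) auto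
    also have "\<dots> = (\<Prod>i\<in>I. emeasure (density (M i) (f i)) (A i))"
      using A by (intro prod.cong refl) (simp add: emeasure_density)
    finally show "emeasure (density (PiM I M) (\<lambda>x. \<Prod>i\<in>I. f i (x i))) (PiE I A)
        = (\<Prod>i\<in>I. emeasure (density (M i) (f i)) (A i))" .
  qed
qed

abbreviation lborel_vec :: "nat \<Rightarrow> (nat \<Rightarrow> real) measure" where
  "lborel_vec d \<equiv> PiM {..<d} (\<lambda>_. lborel)"

lemma sigma_finite_lborel_vec: "sigma_finite_measure (lborel_vec d)"
  by (rule product_sigma_finite.sigma_finite)
    (simp_all add: product_sigma_finite_def lborel.sigma_finite_measure_axioms)

definition gauss_pdf :: "nat \<Rightarrow> (nat \<Rightarrow> real) \<Rightarrow> (nat \<Rightarrow> real) \<Rightarrow> real" where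
  "gauss_pdf d \<mu> y = (\<Prod>i<d. normal_density (\<mu> i) 1 (y i))"

lemma gauss_pdf_nonneg: "0 \<le> gauss_pdf d \<mu> y"
  unfolding gauss_pdf_def by (intro prod_nonneg) (simp add: normal_density_nonneg)

lemma gauss_pdf_measurable[measurable]: "gauss_pdf d \<mu> \<in> borel_measurable (lborel_vec d)"
  unfolding gauss_pdf_def by measurable

lemma prob_space_gauss: "prob_space (gauss d \<mu>)"
  unfolding gauss_def by (intro prob_space_PiM prob_space_normal_density) simp

lemma gauss_eq_density: "gauss d \<mu> = density (lborel_vec d) (\<lambda>y. gauss_pdf d \<mu> y)"
proof -
  have "gauss d \<mu> = density (lborel_vec d) (\<lambda>y. \<Prod>i<d. ennreal (normal_density (\<mu> i) 1 (y i)))"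
    unfolding gauss_def
    by (rule PiM_density)
      (auto intro!: prob_space_normal_density prob_space_imp_sigma_finite
        simp: lborel.sigma_finite_measure_axioms)
  then show ?thesis
    unfolding gauss_pdf_def by (simp add: prod_ennreal normal_density_nonneg)
qed

lemma nn_integral_gauss_pdf: "(\<integral>\<^sup>+ y. gauss_pdf d \<mu> y \<partial>lborel_vec d) = 1"
proof -
  interpret prob_space "gauss d \<mu>" by (rule prob_space_gauss)
  show ?thesis
    using emeasure_space_1 unfolding gauss_eq_density by (simp add: emeasure_density)
qed

lemma PiM_gauss_eq_density:
  "PiM {..<n} (\<lambda>r. gauss d (\<mu> r))
     = density (obs_space n d) (\<lambda>ys. \<Prod>r<n. gauss_pdf d (\<mu> r) (ys r))"
proof -
  have "PiM {..<n} (\<lambda>r. gauss d (\<mu> r))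
      = density (obs_space n d) (\<lambda>ys. \<Prod>r<n. ennreal (gauss_pdf d (\<mu> r) (ys r)))"
    unfolding gauss_eq_density obs_space_def
    by (rule PiM_density)
      (auto simp: gauss_eq_density[symmetric] sigma_finite_lborel_vec
        intro: prob_space_gauss prob_space_imp_sigma_finite)
  then show ?thesis
    by (simp add: prod_ennreal gauss_pdf_nonneg)
qed

lemma normal_density_square:
  "normal_density m 1 x ^ 2 = exp (m\<^sup>2) * normal_density 0 1 x * normal_density (2 * m) 1 x"
proof -
  have "-(x - m)\<^sup>2 / 2 + -(x - m)\<^sup>2 / 2 = m\<^sup>2 + -(x - 0)\<^sup>2 / 2 + -(x - 2 * m)\<^sup>2 / 2"
    by (simp add: power2_eq_square field_simps)
  then have "exp (-(x - m)\<^sup>2 / 2) ^ 2 = exp (m\<^sup>2) * exp (-(x - 0)\<^sup>2 / 2) * exp (-(x - 2 * m)\<^sup>2 / 2)"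
    by (metis exp_add power2_eq_square)
  then show ?thesis
    unfolding normal_density_def by (simp add: power_divide)
qed

lemma gauss_pdf_square:
  "gauss_pdf d \<mu> y ^ 2
     = exp (\<Sum>i<d. (\<mu> i)\<^sup>2) * gauss_pdf d (\<lambda>_. 0) y * gauss_pdf d (\<lambda>i. 2 * \<mu> i) y"
  unfolding gauss_pdf_def
  by (simp add: prod_power_distrib normal_density_square exp_sum prod.distrib mult.assoc)

definition scaled_unit :: "real \<Rightarrow> nat \<Rightarrow> nat \<Rightarrow> real" where
  "scaled_unit s j = (\<lambda>i. if i = j then s else 0)"

lemma sum_square_scaled_unit:
  assumes "j < d"
  shows "(\<Sum>i<d. (scaled_unit s j i)\<^sup>2) = s\<^sup>2"
proof -
  have "(\<Sum>i<d. (scaled_unit s j i)\<^sup>2) = (\<Sum>i<d. if i = j then s\<^sup>2 else 0)"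
    by (intro sum.cong) (auto simp: scaled_unit_def)
  then show ?thesis
    using assms by simp
qed

lemma sqdist_scaled_unit:
  assumes "j < d" "j' < d" "j \<noteq> j'"
  shows "sqdist d (scaled_unit s j) (scaled_unit s j') = 2 * s\<^sup>2"
proof -
  have "sqdist d (scaled_unit s j) (scaled_unit s j')
      = (\<Sum>i<d. (if i = j then s\<^sup>2 else 0) + (if i = j' then s\<^sup>2 else 0))"
    unfolding sqdist_def using assms by (intro sum.cong) (auto simp: scaled_unit_def)
  then show ?thesis
    using assms by (simp add: sum.distrib)
qed

lemma sqdist_nonneg: "0 \<le> sqdist d x y"
  unfolding sqdist_def by (simp add: sum_nonneg)

lemma sqdist_commute: "sqdist d x y = sqdist d y x"
  unfolding sqdist_def by (simp add: power2_commute)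

lemma sqdist_triangle: "sqdist d x z \<le> 2 * sqdist d x y + 2 * sqdist d y z"
proof -
  have "(a - c)\<^sup>2 \<le> 2 * (a - b)\<^sup>2 + 2 * (b - c)\<^sup>2" for a b c :: real
    using zero_le_power2[of "a - 2 * b + c"] by (simp add: power2_eq_square algebra_simps)
  then show ?thesis
    unfolding sqdist_def by (simp add: sum_distrib_left sum.distrib[symmetric] sum_mono)
qed

lemma measurable_sqdist[measurable]:
  assumes [measurable]: "\<And>i. i < d \<Longrightarrow> (\<lambda>x. f x i) \<in> borel_measurable M"
  shows "(\<lambda>x. sqdist d (f x) \<mu>) \<in> borel_measurable M"
  unfolding sqdist_def by measurable

lemma far_from_all_centers_but_one:
  assumes "0 < k" "k \<le> d"
  obtains j0 where "j0 < k" "\<And>j. j < k \<Longrightarrow> j \<noteq> j0 \<Longrightarrow> s\<^sup>2 / 2 \<le> sqdist d m (scaled_unit s j)"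
proof -
  let ?dist = "\<lambda>j. sqdist d m (scaled_unit s j)"
  have "Min (?dist ` {..<k}) \<in> ?dist ` {..<k}"
    using assms(1) by (intro Min_in) auto
  then obtain j0 where j0: "j0 < k" "?dist j0 = Min (?dist ` {..<k})"
    by auto
  then have nearest: "?dist j0 \<le> ?dist j" if "j < k" for j
    using that by simp
  have "s\<^sup>2 / 2 \<le> ?dist j" if "j < k" "j \<noteq> j0" for j
  proof -
    have "2 * s\<^sup>2 = sqdist d (scaled_unit s j) (scaled_unit s j0)"
      using sqdist_scaled_unit[of j d j0 s] that j0 assms by simp
    also have "\<dots> \<le> 2 * ?dist j + 2 * ?dist j0"
      using sqdist_triangle[where d = d and x = "scaled_unit s j" and y = m and z = "scaled_unit s j0"]
      by (simp add: sqdist_commute[of d "scaled_unit s j" m])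
    finally show ?thesis
      using nearest[OF that(1)] by simp
  qed
  with j0 that show ?thesis by blast
qed

definition pdf_envelope :: "nat \<Rightarrow> nat \<Rightarrow> real \<Rightarrow> real \<Rightarrow> (nat \<Rightarrow> real) \<Rightarrow> real" where
  "pdf_envelope k d s lam y =
     (lam * exp (s\<^sup>2) * (\<Sum>j<k. gauss_pdf d (scaled_unit (2 * s) j) y) + gauss_pdf d (\<lambda>_. 0) y / lam) / 2"

lemma pdf_envelope_nonneg: "0 < lam \<Longrightarrow> 0 \<le> pdf_envelope k d s lam y"
  unfolding pdf_envelope_def by (simp add: gauss_pdf_nonneg sum_nonneg)

lemma pdf_envelope_measurable[measurable]: "pdf_envelope k d s lam \<in> borel_measurable (lborel_vec d)"
  unfolding pdf_envelope_def by measurable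

lemma gauss_pdf_le_envelope:
  assumes "j < k" "k \<le> d" "0 < lam"
  shows "gauss_pdf d (scaled_unit s j) y \<le> pdf_envelope k d s lam y"
proof -
  define X where "X = lam * exp (s\<^sup>2) * gauss_pdf d (scaled_unit (2 * s) j) y"
  define Y where "Y = gauss_pdf d (\<lambda>_. 0) y / lam"
  have "scaled_unit (2 * s) j = (\<lambda>i. 2 * scaled_unit s j i)"
    by (auto simp: scaled_unit_def)
  then have "gauss_pdf d (scaled_unit s j) y ^ 2 = X * Y"
    using gauss_pdf_square[of d "scaled_unit s j" y] sum_square_scaled_unit[of j d s] assms
    by (simp add: X_def Y_def)
  then have "gauss_pdf d (scaled_unit s j) y = sqrt (X * Y)"
    by (metis gauss_pdf_nonneg real_sqrt_unique)
  also have "\<dots> \<le> (X + Y) / 2"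
    using assms(3) by (intro arith_geo_mean_sqrt) (simp_all add: X_def Y_def gauss_pdf_nonneg)
  also have "\<dots> \<le> pdf_envelope k d s lam y"
    using member_le_sum[of j "{..<k}" "\<lambda>j. gauss_pdf d (scaled_unit (2 * s) j) y"] assms(1,3)
    unfolding pdf_envelope_def X_def Y_def by (simp add: gauss_pdf_nonneg)
  finally show ?thesis .
qed

lemma nn_integral_pdf_envelope:
  assumes "0 < lam"
  shows "(\<integral>\<^sup>+ y. pdf_envelope k d s lam y \<partial>lborel_vec d) = ennreal ((lam * exp (s\<^sup>2) * k + 1 / lam) / 2)"
proof -
  have "ennreal (pdf_envelope k d s lam y)
      = ennreal (lam * exp (s\<^sup>2) / 2) * (\<Sum>j<k. ennreal (gauss_pdf d (scaled_unit (2 * s) j) y))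
        + ennreal (1 / (2 * lam)) * gauss_pdf d (\<lambda>_. 0) y" for y
    unfolding pdf_envelope_def using assms
    by (simp add: field_simps ennreal_plus[symmetric] ennreal_mult[symmetric] sum_ennreal
        gauss_pdf_nonneg sum_nonneg del: ennreal_plus)
  then have "(\<integral>\<^sup>+ y. pdf_envelope k d s lam y \<partial>lborel_vec d)
      = ennreal (lam * exp (s\<^sup>2) / 2) * k + ennreal (1 / (2 * lam))"
    by (simp add: nn_integral_add nn_integral_cmult nn_integral_sum nn_integral_gauss_pdf)
  also have "\<dots> = ennreal ((lam * exp (s\<^sup>2) * k + 1 / lam) / 2)"
    using assms
    by (simp add: ennreal_of_nat_eq_real_of_nat ennreal_mult[symmetric] ennreal_plus[symmetric]
        field_simps del: ennreal_plus)
  finally show ?thesis .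
qed

lemma sum_gauss_pdf_le_error_plus_envelope:
  assumes "0 < k" "k \<le> d" "0 < lam"
  shows "s\<^sup>2 / 2 * (\<Sum>j<k. gauss_pdf d (scaled_unit s j) y)
     \<le> (\<Sum>j<k. gauss_pdf d (scaled_unit s j) y * sqdist d m (scaled_unit s j))
        + s\<^sup>2 / 2 * pdf_envelope k d s lam y"
proof -
  let ?p = "\<lambda>j. gauss_pdf d (scaled_unit s j) y" and ?dist = "\<lambda>j. sqdist d m (scaled_unit s j)"
  obtain j0 where j0: "j0 < k" and far: "\<And>j. j < k \<Longrightarrow> j \<noteq> j0 \<Longrightarrow> s\<^sup>2 / 2 \<le> ?dist j"
    using far_from_all_centers_but_one[OF assms(1,2)] by blast
  have "s\<^sup>2 / 2 * (\<Sum>j<k. ?p j) = (\<Sum>j<k. ?p j * (s\<^sup>2 / 2))"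
    by (simp add: sum_distrib_left mult.commute)
  also have "\<dots> \<le> (\<Sum>j<k. ?p j * ?dist j + (if j = j0 then ?p j * (s\<^sup>2 / 2) else 0))"
    using mult_left_mono[OF far gauss_pdf_nonneg] mult_nonneg_nonneg[OF gauss_pdf_nonneg sqdist_nonneg]
    by (intro sum_mono) auto
  also have "\<dots> = (\<Sum>j<k. ?p j * ?dist j) + s\<^sup>2 / 2 * ?p j0"
    using j0 by (simp add: sum.distrib)
  also have "\<dots> \<le> (\<Sum>j<k. ?p j * ?dist j) + s\<^sup>2 / 2 * pdf_envelope k d s lam y"
    using gauss_pdf_le_envelope[OF j0 assms(2,3)] by (simp add: mult_left_mono)
  finally show ?thesis .
qed

lemma measurable_obs_component[measurable]:
  "t < n \<Longrightarrow> (\<lambda>ys. ys t) \<in> measurable (obs_space n d) (lborel_vec d)"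
  unfolding obs_space_def by measurable

lemma nn_integral_marginal:
  assumes "r < n" and [measurable]: "h \<in> borel_measurable (lborel_vec d)"
  shows "(\<integral>\<^sup>+ ys. (\<Prod>t\<in>{..<n}-{r}. ennreal (gauss_pdf d (\<mu> t) (ys t))) * h (ys r) \<partial>obs_space n d)
       = (\<integral>\<^sup>+ y. h y \<partial>lborel_vec d)"
proof -
  interpret product_sigma_finite "\<lambda>_::nat. lborel_vec d"
    using sigma_finite_lborel_vec by (simp add: product_sigma_finite_def)
  define F where "F = (\<lambda>t y. if t = r then h y else ennreal (gauss_pdf d (\<mu> t) y))"
  have [measurable]: "F t \<in> borel_measurable (lborel_vec d)" for t
    unfolding F_def by (cases "t = r") simp_all
  have "(\<Prod>t\<in>{..<n}-{r}. ennreal (gauss_pdf d (\<mu> t) (ys t))) = (\<Prod>t\<in>{..<n}-{r}. F t (ys t))" for ys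
    by (intro prod.cong) (auto simp: F_def)
  then have "(\<Prod>t\<in>{..<n}-{r}. ennreal (gauss_pdf d (\<mu> t) (ys t))) * h (ys r) = (\<Prod>t<n. F t (ys t))" for ys
    using assms(1) by (simp add: prod.remove[of "{..<n}" r] F_def mult.commute)
  then have "(\<integral>\<^sup>+ ys. (\<Prod>t\<in>{..<n}-{r}. ennreal (gauss_pdf d (\<mu> t) (ys t))) * h (ys r) \<partial>obs_space n d)
      = (\<Prod>t<n. integral\<^sup>N (lborel_vec d) (F t))"
    unfolding obs_space_def by (simp add: product_nn_integral_prod)
  also have "\<dots> = integral\<^sup>N (lborel_vec d) (F r)"
  proof -
    have "(\<Prod>t\<in>{..<n}-{r}. integral\<^sup>N (lborel_vec d) (F t)) = 1"
      by (intro prod.neutral) (simp add: F_def nn_integral_gauss_pdf)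
    then show ?thesis
      using assms(1) by (simp add: prod.remove[of "{..<n}" r])
  qed
  finally show ?thesis
    by (simp add: F_def)
qed

definition labelled_pdf ::
  "nat \<Rightarrow> nat \<Rightarrow> (nat \<Rightarrow> nat \<Rightarrow> real) \<Rightarrow> (nat \<Rightarrow> nat) \<Rightarrow> (nat \<Rightarrow> nat \<Rightarrow> real) \<Rightarrow> real" where
  "labelled_pdf n d mus z ys = (\<Prod>t<n. gauss_pdf d (mus (z t)) (ys t))"

lemma labelled_pdf_nonneg: "0 \<le> labelled_pdf n d mus z ys"
  unfolding labelled_pdf_def by (simp add: prod_nonneg gauss_pdf_nonneg)

lemma labelled_pdf_measurable[measurable]: "labelled_pdf n d mus z \<in> borel_measurable (obs_space n d)"
  unfolding labelled_pdf_def by measurable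

lemma labelled_pdf_fun_upd:
  assumes "r < n"
  shows "ennreal (labelled_pdf n d mus (z(r := y)) ys)
       = (\<Prod>t\<in>{..<n}-{r}. ennreal (gauss_pdf d (mus (z t)) (ys t))) * gauss_pdf d (mus y) (ys r)"
proof -
  have "(\<Prod>t\<in>{..<n}-{r}. gauss_pdf d (mus ((z(r := y)) t)) (ys t)) = (\<Prod>t\<in>{..<n}-{r}. gauss_pdf d (mus (z t)) (ys t))"
    by (intro prod.cong) auto
  then show ?thesis
    using assms unfolding labelled_pdf_def
    by (simp add: prod.remove[of "{..<n}" r] prod_ennreal gauss_pdf_nonneg prod_nonneg
        ennreal_mult[symmetric] mult.commute)
qed

lemma sum_labels_of_one_sample_lower_bound:
  assumes "0 < k" "k \<le> d" "r < n" "0 < lam"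
    and [measurable]: "\<And>i. i < d \<Longrightarrow> (\<lambda>ys. m ys i) \<in> borel_measurable (obs_space n d)"
  shows "ennreal (s\<^sup>2 / 2 * (k - (lam * exp (s\<^sup>2) * k + 1 / lam) / 2))
     \<le> (\<Sum>y<k. \<integral>\<^sup>+ ys. labelled_pdf n d (scaled_unit s) (z(r := y)) ys * sqdist d (m ys) (scaled_unit s y)
                  \<partial>obs_space n d)"
    (is "ennreal (?c * (real k - ?I)) \<le> ?E")
proof -
  define A where "A ys = (\<Prod>t\<in>{..<n}-{r}. ennreal (gauss_pdf d (scaled_unit s (z t)) (ys t)))" for ys
  let ?p = "\<lambda>j y. gauss_pdf d (scaled_unit s j) y" and ?U = "pdf_envelope k d s lam"
  have c: "0 \<le> ?c" by simp
  have [measurable]: "A \<in> borel_measurable (obs_space n d)"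
    unfolding A_def by measurable
  have pointwise: "ennreal ?c * (\<Sum>j<k. ennreal (?p j y))
      \<le> (\<Sum>j<k. ennreal (?p j y * sqdist d x (scaled_unit s j))) + ennreal (?c * ?U y)" for x y
    using sum_gauss_pdf_le_error_plus_envelope[OF assms(1,2,4), of s y x] assms(4)
    by (simp add: sum_ennreal gauss_pdf_nonneg sqdist_nonneg pdf_envelope_nonneg sum_nonneg
        ennreal_mult[symmetric] ennreal_plus[symmetric] ennreal_leI del: ennreal_plus)
  have "ennreal (?c * k) = (\<integral>\<^sup>+ y. ennreal ?c * (\<Sum>j<k. ennreal (?p j y)) \<partial>lborel_vec d)"
    by (simp add: nn_integral_cmult nn_integral_sum nn_integral_gauss_pdf
        ennreal_of_nat_eq_real_of_nat flip: ennreal_mult)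
  also have "\<dots> = (\<integral>\<^sup>+ ys. A ys * (ennreal ?c * (\<Sum>j<k. ennreal (?p j (ys r)))) \<partial>obs_space n d)"
    unfolding A_def using assms(3) by (intro nn_integral_marginal[symmetric]) measurable
  also have "\<dots> \<le> (\<integral>\<^sup>+ ys. A ys * (\<Sum>j<k. ennreal (?p j (ys r) * sqdist d (m ys) (scaled_unit s j)))
                      + A ys * ennreal (?c * ?U (ys r)) \<partial>obs_space n d)"
    using pointwise by (intro nn_integral_mono) (simp add: mult_left_mono flip: distrib_left)
  also have "\<dots> = (\<Sum>j<k. \<integral>\<^sup>+ ys. A ys * ennreal (?p j (ys r) * sqdist d (m ys) (scaled_unit s j)) \<partial>obs_space n d)
                   + (\<integral>\<^sup>+ ys. A ys * ennreal (?c * ?U (ys r)) \<partial>obs_space n d)"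
    using assms(3) by (simp add: nn_integral_add nn_integral_sum sum_distrib_left)
  also have "(\<Sum>j<k. \<integral>\<^sup>+ ys. A ys * ennreal (?p j (ys r) * sqdist d (m ys) (scaled_unit s j)) \<partial>obs_space n d) = ?E"
    using assms(3) unfolding A_def
    by (intro sum.cong nn_integral_cong refl)
      (simp add: labelled_pdf_fun_upd ennreal_mult gauss_pdf_nonneg sqdist_nonneg labelled_pdf_nonneg
        mult.assoc)
  also have "(\<integral>\<^sup>+ ys. A ys * ennreal (?c * ?U (ys r)) \<partial>obs_space n d)
      = (\<integral>\<^sup>+ y. ennreal ?c * ennreal (?U y) \<partial>lborel_vec d)"
    unfolding A_def ennreal_mult'[OF c] using assms(3) by (intro nn_integral_marginal) simp_all
  also have "\<dots> = ennreal (?c * ?I)"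
    using assms(4) by (simp add: nn_integral_cmult nn_integral_pdf_envelope flip: ennreal_mult)
  finally have le: "ennreal (?c * k) \<le> ?E + ennreal (?c * ?I)" .
  have "ennreal (?c * (k - ?I)) = ennreal (?c * k) - ennreal (?c * ?I)"
    using assms(4) by (simp add: ennreal_minus right_diff_distrib)
  also have "\<dots> \<le> ?E"
    using le by (simp add: ennreal_minus_le_iff add.commute)
  finally show ?thesis .
qed

lemma sum_PiE_insert:
  assumes "x \<notin> S"
  shows "(\<Sum>f\<in>PiE (insert x S) T. F f) = (\<Sum>g\<in>PiE S T. \<Sum>y\<in>T x. F (g(x := y)))"
proof -
  have "(\<Sum>f\<in>PiE (insert x S) T. F f) = (\<Sum>(y, g)\<in>T x \<times> PiE S T. F (g(x := y)))"
    unfolding PiE_insert_eq sum.reindex[OF inj_combinator[OF assms]] by (simp add: comp_def split_def)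
  also have "\<dots> = (\<Sum>g\<in>PiE S T. \<Sum>y\<in>T x. F (g(x := y)))"
    by (simp add: sum.cartesian_product[symmetric] sum.swap[of _ "T x"])
  finally show ?thesis .
qed

lemma sum_label_vectors_lower_bound:
  assumes "0 < k" "k \<le> d" "r < n" "0 < lam"
    and "\<And>i. i < d \<Longrightarrow> (\<lambda>ys. m ys i) \<in> borel_measurable (obs_space n d)"
  shows "of_nat (k ^ (n - 1)) * ennreal (s\<^sup>2 / 2 * (k - (lam * exp (s\<^sup>2) * k + 1 / lam) / 2))
     \<le> (\<Sum>z\<in>PiE {..<n} (\<lambda>_. {..<k}).
           \<integral>\<^sup>+ ys. labelled_pdf n d (scaled_unit s) z ys * sqdist d (m ys) (scaled_unit s (z r)) \<partial>obs_space n d)"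
    (is "_ * ?B \<le> (\<Sum>z\<in>_. ?E z)")
proof -
  have "(\<Sum>z\<in>PiE {..<n} (\<lambda>_. {..<k}). ?E z) = (\<Sum>z\<in>PiE (insert r ({..<n} - {r})) (\<lambda>_. {..<k}). ?E z)"
    using assms(3) by (simp add: insert_absorb)
  also have "\<dots> = (\<Sum>g\<in>PiE ({..<n} - {r}) (\<lambda>_. {..<k}). \<Sum>y<k. ?E (g(r := y)))"
    by (rule sum_PiE_insert) simp
  also have "\<dots> \<ge> (\<Sum>g\<in>PiE ({..<n} - {r}) (\<lambda>_. {..<k}). ?B)"
    using sum_labels_of_one_sample_lower_bound[where m = m, OF assms]
    by (intro sum_mono) simp
  moreover have "(\<Sum>g\<in>PiE ({..<n} - {r}) (\<lambda>_. {..<k}). ?B) = of_nat (k ^ (n - 1)) * ?B"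
    using assms(3) by (simp add: card_PiE)
  ultimately show ?thesis
    by simp
qed

lemma expected_error_eq:
  assumes measurable_means:
    "\<And>r i. r < n \<Longrightarrow> i < d \<Longrightarrow> (\<lambda>ys. means ys (lab ys r) i) \<in> borel_measurable (obs_space n d)"
  shows "expected_error k d n mus means lab
    = ennreal (1 / real k ^ n) * ennreal (1 / real n) *
      (\<Sum>r<n. \<Sum>z\<in>PiE {..<n} (\<lambda>_. {..<k}).
         \<integral>\<^sup>+ ys. labelled_pdf n d mus z ys * sqdist d (means ys (lab ys r)) (mus (z r)) \<partial>obs_space n d)"
proof -
  have [measurable]: "(\<lambda>ys. sqdist d (means ys (lab ys r)) \<mu>) \<in> borel_measurable (obs_space n d)"
    if "r < n" for r \<mu>
    using measurable_means[OF that] by (rule measurable_sqdist)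
  then have measurable_summand: "(\<lambda>ys. ennreal (labelled_pdf n d mus z ys * sqdist d (means ys (lab ys r)) \<mu>))
      \<in> borel_measurable (obs_space n d)" if "r \<in> {..<n}" for r z \<mu>
    using that by simp
  have "(\<integral>\<^sup>+ ys. ennreal (1 / real n * (\<Sum>r<n. sqdist d (means ys (lab ys r)) (mus (z r))))
          \<partial>PiM {..<n} (\<lambda>r. gauss d (mus (z r))))
      = ennreal (1 / real n) * (\<Sum>r<n. \<integral>\<^sup>+ ys. labelled_pdf n d mus z ys
          * sqdist d (means ys (lab ys r)) (mus (z r)) \<partial>obs_space n d)" for z
  proof -
    have "ennreal (labelled_pdf n d mus z ys)
          * ennreal (1 / real n * (\<Sum>r<n. sqdist d (means ys (lab ys r)) (mus (z r))))
        = ennreal (1 / real n)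
          * (\<Sum>r<n. ennreal (labelled_pdf n d mus z ys * sqdist d (means ys (lab ys r)) (mus (z r))))" for ys
      by (simp add: labelled_pdf_nonneg sqdist_nonneg sum_nonneg sum_distrib_left mult_ac
          flip: ennreal_mult sum_ennreal)
    then show ?thesis
      unfolding PiM_gauss_eq_density labelled_pdf_def[symmetric]
      by (simp add: nn_integral_density nn_integral_cmult)
        (subst nn_integral_sum; simp add: measurable_summand)
  qed
  then show ?thesis
    unfolding expected_error_def
    by (simp add: sum_distrib_left sum.swap[of _ "{..<n}"] mult.assoc)
qed

lemma expected_error_scaled_unit_lower_bound:
  assumes "0 < k" "k \<le> d" "1 \<le> n" "0 < lam"
    and measurable_means:
      "\<And>r i. r < n \<Longrightarrow> i < d \<Longrightarrow> (\<lambda>ys. means ys (lab ys r) i) \<in> borel_measurable (obs_space n d)"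
  shows "ennreal (s\<^sup>2 / 2 * (k - (lam * exp (s\<^sup>2) * k + 1 / lam) / 2) / k)
    \<le> expected_error k d n (scaled_unit s) means lab"
proof -
  define B where "B = s\<^sup>2 / 2 * (k - (lam * exp (s\<^sup>2) * k + 1 / lam) / 2)"
  have "real k ^ n = k * k ^ (n - 1)"
    using assms(3) by (simp flip: power_Suc)
  then have "1 / real k ^ n * (1 / real n) * (real n * (real k ^ (n - 1) * B)) = B / k"
    using assms(1,3) by (simp add: field_simps)
  then have "ennreal (B / k)
      = ennreal (1 / real k ^ n) * ennreal (1 / real n) * (\<Sum>r<n. of_nat (k ^ (n - 1)) * ennreal B)"
    by (simp add: ennreal_of_nat_eq_real_of_nat mult.assoc flip: ennreal_mult')
  also have "\<dots> \<le> expected_error k d n (scaled_unit s) means lab"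
  proof -
    have "of_nat (k ^ (n - 1)) * ennreal B
      \<le> (\<Sum>z\<in>PiE {..<n} (\<lambda>_. {..<k}). \<integral>\<^sup>+ ys. labelled_pdf n d (scaled_unit s) z ys
            * sqdist d (means ys (lab ys r)) (scaled_unit s (z r)) \<partial>obs_space n d)" if "r < n" for r
      unfolding B_def
      by (rule sum_label_vectors_lower_bound[OF assms(1,2) that assms(4)]) (rule measurable_means[OF that])
    then have "ennreal (1 / real k ^ n) * ennreal (1 / real n) * (\<Sum>r<n. of_nat (k ^ (n - 1)) * ennreal B)
      \<le> ennreal (1 / real k ^ n) * ennreal (1 / real n) * (\<Sum>r<n. \<Sum>z\<in>PiE {..<n} (\<lambda>_. {..<k}).
            \<integral>\<^sup>+ ys. labelled_pdf n d (scaled_unit s) z ys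
              * sqdist d (means ys (lab ys r)) (scaled_unit s (z r)) \<partial>obs_space n d)"
      by (intro mult_left_mono sum_mono) auto
    also have "\<dots> = expected_error k d n (scaled_unit s) means lab"
      by (rule expected_error_eq[symmetric]) (rule measurable_means)
    finally show ?thesis .
  qed
  finally show ?thesis
    unfolding B_def .
qed

lemma ln_le_twice_ln_scaled:
  assumes "2 \<le> k"
  shows "ln (real k) \<le> 2 * ln (81 / 100 * real k)"
proof -
  have "real k \<le> (81 / 100 * real k)\<^sup>2"
    using assms by (simp add: power2_eq_square)
  then have "ln (real k) \<le> ln ((81 / 100 * real k)\<^sup>2)"
    using assms by simp
  then show ?thesis
    using assms by (simp add: ln_realpow)
qed

theorem theorem7p1:
  "\<exists>c>0. \<forall>k\<ge>2. \<forall>d\<ge>k. \<exists>mus :: nat \<Rightarrow> nat \<Rightarrow> real.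
     \<forall>n\<ge>1. \<forall>(means :: (nat \<Rightarrow> nat \<Rightarrow> real) \<Rightarrow> nat \<Rightarrow> nat \<Rightarrow> real)
              (lab :: (nat \<Rightarrow> nat \<Rightarrow> real) \<Rightarrow> nat \<Rightarrow> nat).
       (\<forall>ys r. r < n \<longrightarrow> lab ys r < k) \<longrightarrow>
       (\<forall>r<n. \<forall>i<d. (\<lambda>ys. means ys (lab ys r) i) \<in> borel_measurable (obs_space n d)) \<longrightarrow>
       expected_error k d n mus means lab \<ge> ennreal (c * ln (real k))"
proof (intro exI[of _ "1 / 40"] conjI allI impI)
  fix k d :: nat
  assume k: "2 \<le> k" and "k \<le> d"
  define s where "s = sqrt (ln (81 / 100 * real k))"
  define lam where "lam = 10 / (9 * real k)"
  have "0 < lam"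
    unfolding lam_def using k by simp
  have "s\<^sup>2 = ln (81 / 100 * real k)"
    unfolding s_def using k by simp
  then have "exp (s\<^sup>2) = 81 / 100 * real k" and "1 / 40 * ln (real k) \<le> s\<^sup>2 / 20"
    using k ln_le_twice_ln_scaled[OF k] by simp_all
  then have "1 / 40 * ln (real k) \<le> s\<^sup>2 / 2 * (k - (lam * exp (s\<^sup>2) * k + 1 / lam) / 2) / k"
    using k by (simp add: lam_def field_simps)
  then show "\<exists>mus. \<forall>n\<ge>1. \<forall>means lab. (\<forall>ys r. r < n \<longrightarrow> lab ys r < k) \<longrightarrow>
       (\<forall>r<n. \<forall>i<d. (\<lambda>ys. means ys (lab ys r) i) \<in> borel_measurable (obs_space n d)) \<longrightarrow>
       ennreal (1 / 40 * ln (real k)) \<le> expected_error k d n mus means lab"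
    using \<open>k \<le> d\<close> k \<open>0 < lam\<close>
    by (intro exI[of _ "scaled_unit s"] allI impI order.trans[OF ennreal_leI
          expected_error_scaled_unit_lower_bound[where lam = lam]]) auto
qed simp

end
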